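(* Let $\Omega=\{\omega_1,\omega_2\}$ with $0<\omega_1<\omega_2$ and let $\mu^*$ be an aggregate market. Then every point in the interior of the surplus triangle of $\mu^*$ is rationalizable.
   Context: A monopolist with zero marginal cost sells one good to a unit mass of consumers with valuations in $\Omega$; a market is a probability vector over $\Omega$. Let $s(p,\omega)=p$ if $\omega\ge p$ and $0$ otherwise, $b(p,\omega)=\omega-p$ if $\omega\ge p$ and $0$ otherwise; in each market $\mu$ the monopolist charges $p^*(\mu)\in\arg\max_p\sum_i s(p,\omega_i)\mu_i$. A segmentation of $\mu^*$ is a finitely supported distribution $\tau$ over markets with $\sum_{\mu^s}\tau(\mu^s)\mu^s=\mu^*$. For a segmentation $\tau$, consumer surplus is $CS=\sum_{\mu^s}\tau(\mu^s)\sum_j b(p^*(\mu^s),\omega_j)\mu^s_j$ and producer surplus (excluding information cost) is $PS=\sum_{\mu^s}\tau(\mu^s)\sum_j s(p^*(\mu^s),\omega_j)\mu^s_j$. The surplus triangle of $\mu^*$ is the set of pairs $(CS,PS)$ with $CS\ge0$, $PS\ge\pi^*$ and $CS+PS\le w^*$, where $\pi^*=\max_p\sum_i s(p,\omega_i)\mu^*_i$ is the uniform monopoly profit and $w^*=\sum_i\omega_i\mu^*_i$ is the efficient total surplus. A posterior-separable, strictly convex cost function is one of the form $C(\tau)=\sum_{\mu^s}\tau(\mu^s)c(\mu^s)-c(\mu^* )$ with $c$ a strictly convex continuous function on markets (e.g. $c=-kH$ for Shannon entropy $H$). Given such $C$, a segmentation is optimal if it maximizes $\sum_{\mu^s}\tau(\mu^s)\sum_i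 s(p^*(\mu^s),\omega_i)\mu^s_i-C(\tau)$ over all segmentations of $\mu^*$. A pair $(CS,PS)$ is rationalizable if there exist a segmentation $\tau$ and a strictly convex posterior-separable cost function $C$ such that $\tau$ is optimal for the monopolist under $C$ and $\tau$ yields that $(CS,PS)$ pair. *)

theory Defs
  imports "HOL-Analysis.Analysis"
begin

text \<open>Two valuations w1 < w2.  A market is a pair (mass on w1, mass on w2)
  in the probability simplex.\<close>

definition markets :: "(real \<times> real) set" where
  "markets = {m. fst m \<ge> 0 \<and> snd m \<ge> 0 \<and> fst m + snd m = 1}"

definition sval :: "real \<Rightarrow> real \<Rightarrow> real" where
  "sval p w = (if w \<ge> p then p else 0)"

definition bval :: "real \<Rightarrow> real \<Rightarrow> real" where
  "bval p w = (if w \<ge> p then w - p else 0)"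

definition profit :: "real \<Rightarrow> real \<Rightarrow> real \<times> real \<Rightarrow> real \<Rightarrow> real" where
  "profit w1 w2 m p = sval p w1 * fst m + sval p w2 * snd m"

definition cons_surplus :: "real \<Rightarrow> real \<Rightarrow> real \<times> real \<Rightarrow> real \<Rightarrow> real" where
  "cons_surplus w1 w2 m p = bval p w1 * fst m + bval p w2 * snd m"

definition opt_price :: "real \<Rightarrow> real \<Rightarrow> real \<times> real \<Rightarrow> real \<Rightarrow> bool" where
  "opt_price w1 w2 m p \<longleftrightarrow> (\<forall>q. profit w1 w2 m q \<le> profit w1 w2 m p)"

definition max_profit :: "real \<Rightarrow> real \<Rightarrow> real \<times> real \<Rightarrow> real" where
  "max_profit w1 w2 m = (SUP p. profit w1 w2 m p)"

definition eff_surplus :: "real \<Rightarrow> real \<Rightarrow> real \<times> real \<Rightarrow> real" where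
  "eff_surplus w1 w2 m = w1 * fst m + w2 * snd m"

definition supp :: "((real \<times> real) \<Rightarrow> real) \<Rightarrow> (real \<times> real) set" where
  "supp \<tau> = {m. \<tau> m \<noteq> 0}"

definition segmentation :: "((real \<times> real) \<Rightarrow> real) \<Rightarrow> real \<times> real \<Rightarrow> bool" where
  "segmentation \<tau> mu \<longleftrightarrow> finite (supp \<tau>) \<and> (\<forall>m. \<tau> m \<ge> 0) \<and> supp \<tau> \<subseteq> markets \<and>
     (\<Sum>m\<in>supp \<tau>. \<tau> m) = 1 \<and> (\<Sum>m\<in>supp \<tau>. \<tau> m *\<^sub>R m) = mu"

definition strict_convex_on :: "'a::real_vector set \<Rightarrow> ('a \<Rightarrow> real) \<Rightarrow> bool" where
  "strict_convex_on S f \<longleftrightarrow> convex S \<and>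
    (\<forall>x\<in>S. \<forall>y\<in>S. \<forall>u. x \<noteq> y \<longrightarrow> 0 < u \<longrightarrow> u < 1 \<longrightarrow>
        f (u *\<^sub>R x + (1 - u) *\<^sub>R y) < u * f x + (1 - u) * f y)"

definition info_cost :: "((real \<times> real) \<Rightarrow> real) \<Rightarrow> real \<times> real \<Rightarrow> ((real \<times> real) \<Rightarrow> real) \<Rightarrow> real" where
  "info_cost c mu \<tau> = (\<Sum>m\<in>supp \<tau>. \<tau> m * c m) - c mu"

definition objective :: "real \<Rightarrow> real \<Rightarrow> ((real \<times> real) \<Rightarrow> real) \<Rightarrow> real \<times> real \<Rightarrow> ((real \<times> real) \<Rightarrow> real) \<Rightarrow> real" where
  "objective w1 w2 c mu \<tau> = (\<Sum>m\<in>supp \<tau>. \<tau> m * max_profit w1 w2 m) - info_cost c mu \<tau>"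

definition CS :: "real \<Rightarrow> real \<Rightarrow> ((real \<times> real) \<Rightarrow> real) \<Rightarrow> ((real \<times> real) \<Rightarrow> real) \<Rightarrow> real" where
  "CS w1 w2 \<tau> pr = (\<Sum>m\<in>supp \<tau>. \<tau> m * cons_surplus w1 w2 m (pr m))"

definition PS :: "real \<Rightarrow> real \<Rightarrow> ((real \<times> real) \<Rightarrow> real) \<Rightarrow> ((real \<times> real) \<Rightarrow> real) \<Rightarrow> real" where
  "PS w1 w2 \<tau> pr = (\<Sum>m\<in>supp \<tau>. \<tau> m * profit w1 w2 m (pr m))"

definition surplus_triangle :: "real \<Rightarrow> real \<Rightarrow> real \<times> real \<Rightarrow> (real \<times> real) set" where
  "surplus_triangle w1 w2 mu = {(x, y). x \<ge> 0 \<and> y \<ge> max_profit w1 w2 mu \<and> x + y \<le> eff_surplus w1 w2 mu}"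

definition rationalizable :: "real \<Rightarrow> real \<Rightarrow> real \<times> real \<Rightarrow> real \<times> real \<Rightarrow> bool" where
  "rationalizable w1 w2 mu z \<longleftrightarrow>
    (\<exists>\<tau> pr c. segmentation \<tau> mu \<and> (\<forall>m\<in>supp \<tau>. opt_price w1 w2 m (pr m)) \<and>
       strict_convex_on markets c \<and> continuous_on markets c \<and>
       (\<forall>\<tau>'. segmentation \<tau>' mu \<longrightarrow> objective w1 w2 c mu \<tau>' \<le> objective w1 w2 c mu \<tau>) \<and>
       CS w1 w2 \<tau> pr = fst z \<and> PS w1 w2 \<tau> pr = snd z)"

end

theory Submission
  imports Defs
begin

text \<open>An interior point (x, y) of the surplus triangle is produced by splitting the aggregate
  market into a low segment, whose high-valuation share is below w1/w2 so that the
  monopolist charges w1 and high types keep surplus w2 - w1, and a high segment priced at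
  w2, which extracts everything. The segment weights and compositions are pinned down by
  x, y and Bayes plausibility. The segmentation is then made optimal by a cost c that is
  the maximum of two strictly convex parabolas majorising the revenue function
  max w1 (w2 b) and touching it exactly at the two segments: for any segmentation the
  objective is at most c mu, with equality for ours.\<close>

lemma markets_iff: "m \<in> markets \<longleftrightarrow> m = (1 - snd m, snd m) \<and> 0 \<le> snd m \<and> snd m \<le> 1"
  by (cases m) (auto simp: markets_def)

lemma Pair_in_markets_iff [simp]: "(1 - b, b) \<in> markets \<longleftrightarrow> 0 \<le> b \<and> b \<le> 1"
  by (auto simp: markets_def)

lemma inj_on_snd_markets: "inj_on snd markets"
  by (rule inj_onI) (metis markets_iff)

lemma convex_markets: "convex markets"
  unfolding markets_def by (rule convexI) (auto simp: algebra_simps distrib_left[symmetric])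

lemma profit_market:
  assumes "w1 < w2" "m \<in> markets"
  shows "profit w1 w2 m p = (if p \<le> w1 then p else if p \<le> w2 then p * snd m else 0)"
proof -
  have "fst m + snd m = 1" using assms(2) by (simp add: markets_def)
  then show ?thesis using assms(1) by (auto simp: profit_def sval_def simp flip: distrib_left)
qed

lemma profit_le_max:
  assumes "0 < w1" "w1 < w2" "m \<in> markets"
  shows "profit w1 w2 m p \<le> max w1 (w2 * snd m)"
proof -
  have "0 \<le> snd m" using assms(3) by (simp add: markets_iff)
  then have "p * snd m \<le> w2 * snd m" if "p \<le> w2" using that by (simp add: mult_right_mono)
  then show ?thesis using assms by (auto simp: profit_market)
qed

lemma profit_attains_max:
  assumes "0 < w1" "w1 < w2" "m \<in> markets"
  obtains p where "profit w1 w2 m p = max w1 (w2 * snd m)"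
  using assms by (metis profit_market max_def order.refl not_le)

lemma max_profit_market:
  assumes "0 < w1" "w1 < w2" "m \<in> markets"
  shows "max_profit w1 w2 m = max w1 (w2 * snd m)"
proof -
  obtain p where "profit w1 w2 m p = max w1 (w2 * snd m)"
    using profit_attains_max[OF assms] .
  then have "max w1 (w2 * snd m) \<in> range (profit w1 w2 m)" by (metis rangeI)
  then show ?thesis
    unfolding max_profit_def by (rule cSup_eq_maximum) (use profit_le_max[OF assms] in auto)
qed

lemma opt_price_iff:
  assumes "0 < w1" "w1 < w2" "m \<in> markets"
  shows "opt_price w1 w2 m p \<longleftrightarrow> profit w1 w2 m p = max w1 (w2 * snd m)"
  unfolding opt_price_def
  by (rule profit_attains_max[OF assms]) (metis profit_le_max[OF assms] order.antisym)

lemma interior_subset_halfspace_lt: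
  fixes a :: "'a::euclidean_space"
  assumes "a \<noteq> 0" "S \<subseteq> {x. a \<bullet> x \<le> b}"
  shows "interior S \<subseteq> {x. a \<bullet> x < b}"
  using interior_mono[OF assms(2)] assms(1) by simp

lemma interior_surplus_triangle:
  assumes "z \<in> interior (surplus_triangle w1 w2 mu)"
  shows "0 < fst z" "max_profit w1 w2 mu < snd z" "fst z + snd z < eff_surplus w1 w2 mu"
proof -
  have "surplus_triangle w1 w2 mu \<subseteq> {x. (-1, 0) \<bullet> x \<le> 0}"
    and "surplus_triangle w1 w2 mu \<subseteq> {x. (0, -1) \<bullet> x \<le> - max_profit w1 w2 mu}"
    and "surplus_triangle w1 w2 mu \<subseteq> {x. (1, 1) \<bullet> x \<le> eff_surplus w1 w2 mu}"
    by (auto simp: surplus_triangle_def)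
  then have "z \<in> {x. (-1, 0) \<bullet> x < 0}" "z \<in> {x. (0, -1) \<bullet> x < - max_profit w1 w2 mu}"
    "z \<in> {x. (1, 1) \<bullet> x < eff_surplus w1 w2 mu}"
    using assms by (auto simp: zero_prod_def dest!: interior_subset_halfspace_lt[rotated])
  then show "0 < fst z" "max_profit w1 w2 mu < snd z" "fst z + snd z < eff_surplus w1 w2 mu"
    by (auto simp: inner_prod_def)
qed

lemma strict_convex_on_max:
  assumes "strict_convex_on S f" "strict_convex_on S g"
  shows "strict_convex_on S (\<lambda>x. max (f x) (g x))"
  unfolding strict_convex_on_def
proof (intro conjI ballI allI impI)
  show "convex S" using assms(1) by (simp add: strict_convex_on_def)
  fix x y and u :: real assume "x \<in> S" "y \<in> S" "x \<noteq> y" "0 < u" "u < 1"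
  then have "f (u *\<^sub>R x + (1 - u) *\<^sub>R y) < u * f x + (1 - u) * f y"
    "g (u *\<^sub>R x + (1 - u) *\<^sub>R y) < u * g x + (1 - u) * g y"
    and "u * f x + (1 - u) * f y \<le> u * max (f x) (g x) + (1 - u) * max (f y) (g y)"
    and "u * g x + (1 - u) * g y \<le> u * max (f x) (g x) + (1 - u) * max (f y) (g y)"
    using assms by (auto simp: strict_convex_on_def intro!: add_mono mult_left_mono)
  then show "max (f (u *\<^sub>R x + (1 - u) *\<^sub>R y)) (g (u *\<^sub>R x + (1 - u) *\<^sub>R y))
      < u * max (f x) (g x) + (1 - u) * max (f y) (g y)"
    by linarith
qed

lemma strict_convex_on_markets_parabola:
  assumes "0 < k"
  shows "strict_convex_on markets (\<lambda>m. a + b * snd m + k * (snd m - g)\<^sup>2)"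
  unfolding strict_convex_on_def
proof (intro conjI ballI allI impI convex_markets)
  fix p q :: "real \<times> real" and u :: real
  assume "p \<in> markets" "q \<in> markets" "p \<noteq> q" "0 < u" "u < 1"
  then have "snd p \<noteq> snd q" using inj_on_snd_markets by (auto simp: inj_on_def)
  then have "0 < k * u * (1 - u) * (snd p - snd q)\<^sup>2" using assms \<open>0 < u\<close> \<open>u < 1\<close> by simp
  moreover have
    "u * (a + b * snd p + k * (snd p - g)\<^sup>2) + (1 - u) * (a + b * snd q + k * (snd q - g)\<^sup>2)
      - (a + b * (u * snd p + (1 - u) * snd q) + k * (u * snd p + (1 - u) * snd q - g)\<^sup>2)
      = k * u * (1 - u) * (snd p - snd q)\<^sup>2"
    by (simp add: power2_eq_square algebra_simps)
  ultimately show
    "a + b * snd (u *\<^sub>R p + (1 - u) *\<^sub>R q) + k * (snd (u *\<^sub>R p + (1 - u) *\<^sub>R q) - g)\<^sup>2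
      < u * (a + b * snd p + k * (snd p - g)\<^sup>2) + (1 - u) * (a + b * snd q + k * (snd q - g)\<^sup>2)"
    by simp
qed

definition two_point :: "real \<Rightarrow> real \<times> real \<Rightarrow> real \<times> real \<Rightarrow> real \<times> real \<Rightarrow> real" where
  "two_point t m1 m2 = (\<lambda>m. if m = m1 then t else if m = m2 then 1 - t else 0)"

lemma supp_two_point:
  assumes "m1 \<noteq> m2" "0 < t" "t < 1"
  shows "supp (two_point t m1 m2) = {m1, m2}"
  using assms by (auto simp: supp_def two_point_def)

lemma sum_two_point:
  assumes "m1 \<noteq> m2" "0 < t" "t < 1"
  shows "(\<Sum>m\<in>supp (two_point t m1 m2). two_point t m1 m2 m *\<^sub>R f m)
    = t *\<^sub>R f m1 + (1 - t) *\<^sub>R f m2"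
  using assms by (simp add: supp_two_point) (simp add: two_point_def)

lemma segmentation_two_point:
  assumes "m1 \<in> markets" "m2 \<in> markets" "m1 \<noteq> m2" "0 < t" "t < 1"
  shows "segmentation (two_point t m1 m2) (t *\<^sub>R m1 + (1 - t) *\<^sub>R m2)"
  using assms sum_two_point[OF assms(3-5), of "\<lambda>_. 1::real"] sum_two_point[OF assms(3-5), of id]
  unfolding segmentation_def by (simp add: supp_two_point) (simp add: two_point_def)

lemma objective_le_majorant:
  assumes "\<forall>m\<in>markets. max_profit w1 w2 m \<le> c m" "segmentation \<tau> mu"
  shows "objective w1 w2 c mu \<tau> \<le> c mu"
proof -
  have "(\<Sum>m\<in>supp \<tau>. \<tau> m * max_profit w1 w2 m) \<le> (\<Sum>m\<in>supp \<tau>. \<tau> m * c m)"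
    using assms unfolding segmentation_def by (intro sum_mono mult_left_mono) auto
  then show ?thesis unfolding objective_def info_cost_def by simp
qed

lemma objective_eq_majorant:
  assumes "\<forall>m\<in>supp \<tau>. c m = max_profit w1 w2 m"
  shows "objective w1 w2 c mu \<tau> = c mu"
  using assms by (simp add: objective_def info_cost_def)

lemma strict_convex_majorant_of_max_profit:
  assumes "0 < w1" "w1 < w2" "0 \<le> bL" "w2 * bL < w1" "w1 < w2 * bH" "bH \<le> 1"
  obtains c where "strict_convex_on markets c" "continuous_on markets c"
    "\<forall>m\<in>markets. max_profit w1 w2 m \<le> c m"
    "c (1 - bL, bL) = max_profit w1 w2 (1 - bL, bL)"
    "c (1 - bH, bH) = max_profit w1 w2 (1 - bH, bH)"
proof
  have "w2 * bL < w2 * bH" using assms by linarith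
  then have "bL < bH" using assms(1,2) by simp
  define k1 where "k1 = (w2 * bH - w1) / (bH - bL)\<^sup>2"
  define k2 where "k2 = (w1 - w2 * bL) / (bH - bL)\<^sup>2"
  have "0 < k1" "0 < k2" using assms \<open>bL < bH\<close> by (simp_all add: k1_def k2_def)
  \<comment> \<open>Both parabolas pass through (bL, w1) and (bH, w2 * bH), the points of the revenue
    graph max w1 (w2 b) at the two segments.\<close>
  define c where
    "c m = max (w1 + k1 * (snd m - bL)\<^sup>2) (w2 * snd m + k2 * (snd m - bH)\<^sup>2)" for m :: "real \<times> real"
  show "strict_convex_on markets c"
    unfolding c_def using strict_convex_on_markets_parabola[OF \<open>0 < k1\<close>, of w1 0 bL]
      strict_convex_on_markets_parabola[OF \<open>0 < k2\<close>, of 0 w2 bH]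
    by (intro strict_convex_on_max) simp_all
  show "continuous_on markets c"
    unfolding c_def by (intro continuous_intros)
  have "max w1 (w2 * snd m) \<le> c m" for m
    using \<open>0 < k1\<close> \<open>0 < k2\<close> unfolding c_def by (intro max.mono) simp_all
  then show "\<forall>m\<in>markets. max_profit w1 w2 m \<le> c m"
    by (simp add: max_profit_market[OF assms(1,2)])
  have "k1 * (bH - bL)\<^sup>2 = w2 * bH - w1" "k2 * (bL - bH)\<^sup>2 = w1 - w2 * bL"
    using \<open>bL < bH\<close> by (simp_all add: k1_def k2_def power2_commute)
  then show "c (1 - bL, bL) = max_profit w1 w2 (1 - bL, bL)"
    and "c (1 - bH, bH) = max_profit w1 w2 (1 - bH, bH)"
    using assms \<open>bL < bH\<close> by (simp_all add: c_def max_profit_market)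
qed

lemma rationalizable_two_segments:
  assumes "0 < w1" "w1 < w2" "0 \<le> bL" "w2 * bL < w1" "w1 < w2 * bH" "bH \<le> 1" "0 < t" "t < 1"
  shows "rationalizable w1 w2 (t *\<^sub>R (1 - bL, bL) + (1 - t) *\<^sub>R (1 - bH, bH))
    ((w2 - w1) * (t * bL), t * w1 + (1 - t) * (w2 * bH))"
proof -
  define mL mH where "mL = (1 - bL, bL)" and "mH = (1 - bH, bH)"
  have "w2 * bL < w2 * bH" using assms by linarith
  then have "bL < bH" using assms(1,2) by simp
  then have "mL \<in> markets" "mH \<in> markets" "mL \<noteq> mH"
    using assms by (auto simp: mL_def mH_def)
  define \<tau> where "\<tau> = two_point t mL mH"
  define pr where "pr m = (if m = mL then w1 else w2)" for m :: "real \<times> real"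
  have supp: "supp \<tau> = {mL, mH}"
    using supp_two_point \<open>mL \<noteq> mH\<close> assms(7,8) unfolding \<tau>_def .
  have sum: "(\<Sum>m\<in>supp \<tau>. \<tau> m * f m) = t * f mL + (1 - t) * f mH"
    for f :: "real \<times> real \<Rightarrow> real"
    using sum_two_point[of mL mH t f] \<open>mL \<noteq> mH\<close> assms(7,8) unfolding \<tau>_def by simp
  obtain c where c: "strict_convex_on markets c" "continuous_on markets c"
    "\<forall>m\<in>markets. max_profit w1 w2 m \<le> c m"
    "c mL = max_profit w1 w2 mL" "c mH = max_profit w1 w2 mH"
    using strict_convex_majorant_of_max_profit[OF assms(1-6)] unfolding mL_def mH_def .
  then have touch: "\<forall>m\<in>supp \<tau>. c m = max_profit w1 w2 m" by (simp add: supp)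
  have seg: "segmentation \<tau> (t *\<^sub>R mL + (1 - t) *\<^sub>R mH)"
    unfolding \<tau>_def
    using segmentation_two_point \<open>mL \<in> markets\<close> \<open>mH \<in> markets\<close> \<open>mL \<noteq> mH\<close> assms(7,8) .
  have "opt_price w1 w2 mL w1" "opt_price w1 w2 mH w2"
    using assms \<open>mL \<in> markets\<close> \<open>mH \<in> markets\<close>
    by (simp_all add: opt_price_iff profit_market mL_def mH_def)
  then have opt: "\<forall>m\<in>supp \<tau>. opt_price w1 w2 m (pr m)"
    using \<open>mL \<noteq> mH\<close> by (simp add: supp pr_def)
  have "CS w1 w2 \<tau> pr = (w2 - w1) * (t * bL)"
    using assms \<open>mL \<noteq> mH\<close> by (simp add: CS_def sum pr_def cons_surplus_def bval_def mL_def mH_def)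
  moreover have "PS w1 w2 \<tau> pr = t * w1 + (1 - t) * (w2 * bH)"
    using assms \<open>mL \<in> markets\<close> \<open>mH \<in> markets\<close> \<open>mL \<noteq> mH\<close>
    by (simp add: PS_def sum pr_def profit_market mL_def mH_def)
  moreover have "objective w1 w2 c mu' \<tau>' \<le> objective w1 w2 c mu' \<tau>"
    if "segmentation \<tau>' mu'" for \<tau>' mu'
    using objective_le_majorant[OF c(3) that] objective_eq_majorant[OF touch] by simp
  ultimately show ?thesis
    using seg opt c(1,2) unfolding rationalizable_def mL_def mH_def
    by (intro exI[of _ \<tau>] exI[of _ pr] exI[of _ c]) simp
qed

lemma two_segment_split:
  fixes w1 w2 b x y :: real
  assumes "0 < w1" "w1 < w2" "0 < x" "max w1 (w2 * b) < y" "x + y < w1 * (1 - b) + w2 * b"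
  obtains t bL bH where "0 < t" "t < 1" "0 \<le> bL" "w2 * bL < w1" "w1 < w2 * bH" "bH \<le> 1"
    "t * bL + (1 - t) * bH = b" "(w2 - w1) * (t * bL) = x" "t * w1 + (1 - t) * (w2 * bH) = y"
proof
  \<comment> \<open>u is the mass of high types in the low segment, the only consumers left with surplus;
    then PS = t w1 + w2 (b - u) determines the weight t of the low segment.\<close>
  define u where "u = x / (w2 - w1)"
  define t where "t = (y - w2 * (b - u)) / w1"
  have "(w2 - w1) * u = x" using assms(2) by (simp add: u_def)
  then have u: "w2 * u - w1 * u = x" by (simp add: left_diff_distrib)
  have "0 < u" using assms by (simp add: u_def)
  have "w1 * t = y - w2 * (b - u)" using assms(1) unfolding t_def by simp
  then have t: "w1 * t = y - w2 * b + w2 * u" by (simp add: right_diff_distrib)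
  have "(w2 - w1) * u < (w2 - w1) * b" using assms u by (simp add: algebra_simps)
  then have "u < b" using assms(2) mult_less_cancel_left_pos[of "w2 - w1"] by simp
  then have "w1 * u < w1 * b" using assms(1) by simp
  then have "w1 * t < w1 * 1" using t u assms(5) by (simp add: algebra_simps)
  then show "t < 1" using assms(1) by simp
  have "0 < w1 * t" using t assms(4) \<open>0 < u\<close> \<open>0 < w1\<close> \<open>w1 < w2\<close> by (simp add: add_pos_pos)
  then show "0 < t" using assms(1) by (simp add: zero_less_mult_iff)
  show "0 \<le> u / t" using \<open>0 < u\<close> \<open>0 < t\<close> by simp
  show "w2 * (u / t) < w1" using t assms(4) \<open>0 < t\<close> by (simp add: field_simps)
  show "w1 < w2 * ((b - u) / (1 - t))" using t assms(4) \<open>t < 1\<close> by (simp add: field_simps)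
  have "w1 * (b + t) < w1 * (1 + u)" using t u assms(5) by (simp add: algebra_simps)
  then show "(b - u) / (1 - t) \<le> 1" using assms(1) \<open>t < 1\<close> by simp
  show "t * (u / t) + (1 - t) * ((b - u) / (1 - t)) = b" using \<open>0 < t\<close> \<open>t < 1\<close> by simp
  show "(w2 - w1) * (t * (u / t)) = x" using \<open>(w2 - w1) * u = x\<close> \<open>0 < t\<close> by simp
  have "(1 - t) * (w2 * ((b - u) / (1 - t))) = w2 * (b - u)" using \<open>t < 1\<close> by simp
  then show "t * w1 + (1 - t) * (w2 * ((b - u) / (1 - t))) = y"
    using t by (simp add: right_diff_distrib mult.commute)
qed

theorem proposition5:
  fixes w1 w2 :: real and mu :: "real \<times> real" and z :: "real \<times> real"
  assumes "0 < w1" and "w1 < w2" and "mu \<in> markets"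
    and "z \<in> interior (surplus_triangle w1 w2 mu)"
  shows "rationalizable w1 w2 mu z"
proof -
  have mu: "mu = (1 - snd mu, snd mu)" "fst mu = 1 - snd mu"
    using assms(3) by (simp_all add: markets_def prod_eq_iff)
  have "0 < fst z" "max w1 (w2 * snd mu) < snd z"
    "fst z + snd z < w1 * (1 - snd mu) + w2 * snd mu"
    using interior_surplus_triangle[OF assms(4)] max_profit_market[OF assms(1-3)] mu
    by (auto simp: eff_surplus_def)
  then obtain t bL bH where "0 < t" "t < 1" "0 \<le> bL" "w2 * bL < w1" "w1 < w2 * bH" "bH \<le> 1"
    and "t * bL + (1 - t) * bH = snd mu" "(w2 - w1) * (t * bL) = fst z"
    and "t * w1 + (1 - t) * (w2 * bH) = snd z"
    using two_segment_split assms(1,2) by blast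
  moreover from this have "t *\<^sub>R (1 - bL, bL) + (1 - t) *\<^sub>R (1 - bH, bH) = mu"
    by (subst mu(1)) (simp add: algebra_simps)
  ultimately show ?thesis
    using rationalizable_two_segments[OF assms(1,2)] by (metis prod.collapse)
qed

end
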